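(* Let $\rho,p:\mathbb R^3\to\mathbb R$ and $H:\mathbb R^3\to\mathbb R^3$ be smooth with $\rho>0$, let $\gamma$ be a constant, and let $P$ be the $3\times3$ second order operator on $\mathbb R_t\times\mathbb R^3_x$ acting on $\beta(t,x)$ by $P\beta=-\rho\partial_t^2\beta+\gamma\nabla(p\operatorname{div}\beta)+\nabla(\beta\cdot\nabla p)+(\nabla\times(\nabla\times(\beta\times H)))\times H+(\nabla\times H)\times(\nabla\times(\beta\times H))$, with principal symbol $p_2(x;\tau,\xi)=(\rho\tau^2-(H\cdot\xi)^2)\operatorname{Id}_3-(\gamma p+|H|^2)\xi\otimes\xi+(H\cdot\xi)(\xi\otimes H+H\otimes\xi)$. Assume $c^2=\gamma p/\rho>0$, $0<|H|^2\ne\rho c^2$, $\xi\cdot H\ne0$ and $\xi\times H\neq0$. Then the characteristic variety $\{\det p_2=0\}$ of $P$ is the disjoint union of $\{q_1=0\}$, $\{q_2=0\}$, $\{q_3=0\}$, where $q_1=\rho\tau^2-(H\cdot\xi)^2$, $q_2=\rho(\tau^2-c_s^2(x,\xi))$, $q_3=\rho(\tau^2-c_f^2(x,\xi))$ with $c_f^2(x,\xi)=\tfrac12\big((c^2+h^2)|\xi|^2+\sqrt{(c^2-h^2)^2|\xi|^4+4b^2c^2|\xi|^2}\big)$, $c_s^2(x,\xi)=\tfrac12\big((c^2+h^2)|\xi|^2-\sqrt{(c^2-h^2)^2|\xi|^4+4b^2c^2|\xi|^2}\big)$, $h^2=|H|^2/\rho$, $b^2=|\xi\times H|^2/\rho$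.
   Context: $(\tau,\xi)$ are dual to $(t,x)$; principal symbols are taken with the convention $\partial\mapsto i\xi$ (so $\partial_t\mapsto i\tau$). The inequalities $\xi\cdot H\neq0$, $\xi\times H\ne0$ are imposed at the points $(t,x;\tau,\xi)$ considered, with $H=H(x)$. *)

theory Defs
  imports "HOL-Analysis.Analysis" "HOL-Analysis.Cross3"
begin

fun pdir :: "(real^3 \<Rightarrow> real) \<Rightarrow> (real^3) list \<Rightarrow> real^3 \<Rightarrow> real" where
  "pdir f [] = f"
| "pdir f (v # vs) = (\<lambda>x. deriv (\<lambda>s. pdir f vs (x + s *\<^sub>R v)) 0)"

definition smooth_fun :: "(real^3 \<Rightarrow> real) \<Rightarrow> bool" where
  "smooth_fun f \<longleftrightarrow>
     (\<forall>vs. continuous_on UNIV (pdir f vs) \<and>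
           (\<forall>v x. (\<lambda>s. pdir f vs (x + s *\<^sub>R v)) differentiable (at 0)))"

definition smooth_vfun :: "(real^3 \<Rightarrow> real^3) \<Rightarrow> bool" where
  "smooth_vfun F \<longleftrightarrow> (\<forall>i. smooth_fun (\<lambda>x. F x $ i))"

definition p2 :: "real \<Rightarrow> (real^3 \<Rightarrow> real) \<Rightarrow> (real^3 \<Rightarrow> real) \<Rightarrow> (real^3 \<Rightarrow> real^3)
                  \<Rightarrow> real^3 \<Rightarrow> real \<Rightarrow> real^3 \<Rightarrow> real^3^3" where
  "p2 \<gamma> \<rho> p H x \<tau> \<xi> = (\<chi> i j.
      (\<rho> x * \<tau>^2 - (H x \<bullet> \<xi>)^2) * (if i = j then 1 else 0)
      - (\<gamma> * p x + (norm (H x))^2) * (\<xi> $ i * \<xi> $ j)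
      + (H x \<bullet> \<xi>) * (\<xi> $ i * H x $ j + H x $ i * \<xi> $ j))"

definition csq :: "real \<Rightarrow> (real^3 \<Rightarrow> real) \<Rightarrow> (real^3 \<Rightarrow> real) \<Rightarrow> real^3 \<Rightarrow> real" where
  "csq \<gamma> \<rho> p x = \<gamma> * p x / \<rho> x"

definition hsq :: "(real^3 \<Rightarrow> real) \<Rightarrow> (real^3 \<Rightarrow> real^3) \<Rightarrow> real^3 \<Rightarrow> real" where
  "hsq \<rho> H x = (norm (H x))^2 / \<rho> x"

definition bsq :: "(real^3 \<Rightarrow> real) \<Rightarrow> (real^3 \<Rightarrow> real^3) \<Rightarrow> real^3 \<Rightarrow> real^3 \<Rightarrow> real" where
  "bsq \<rho> H x \<xi> = (norm (cross3 \<xi> (H x)))^2 / \<rho> x"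

definition cfsq where
  "cfsq \<gamma> \<rho> p H x \<xi> = (1/2) * ((csq \<gamma> \<rho> p x + hsq \<rho> H x) * (norm \<xi>)^2
     + sqrt ((csq \<gamma> \<rho> p x - hsq \<rho> H x)^2 * (norm \<xi>)^4
             + 4 * bsq \<rho> H x \<xi> * csq \<gamma> \<rho> p x * (norm \<xi>)^2))"

definition cssq where
  "cssq \<gamma> \<rho> p H x \<xi> = (1/2) * ((csq \<gamma> \<rho> p x + hsq \<rho> H x) * (norm \<xi>)^2
     - sqrt ((csq \<gamma> \<rho> p x - hsq \<rho> H x)^2 * (norm \<xi>)^4
             + 4 * bsq \<rho> H x \<xi> * csq \<gamma> \<rho> p x * (norm \<xi>)^2))"

definition q1 where "q1 \<rho> H x \<tau> \<xi> = \<rho> x * \<tau>^2 - (H x \<bullet> \<xi>)^2"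
definition q2 where "q2 \<gamma> \<rho> p H x \<tau> \<xi> = \<rho> x * (\<tau>^2 - cssq \<gamma> \<rho> p H x \<xi>)"
definition q3 where "q3 \<gamma> \<rho> p H x \<tau> \<xi> = \<rho> x * (\<tau>^2 - cfsq \<gamma> \<rho> p H x \<xi>)"

end

theory Submission
  imports Defs
begin

text \<open>The symbol is q1 Id plus a rank-two perturbation with range span {\<xi>, H}, so
  det p2 = q1 \<rho>^2 Q(\<tau>^2) with Q a monic quadratic; by Lagrange's identity
  |\<xi> \<times> H|^2 + (\<xi> \<bullet> H)^2 = |\<xi>|^2 |H|^2 its roots are c_s^2 and c_f^2, i.e. det p2 = q1 q2 q3.
  The two roots differ by the square root of a discriminant that is positive once \<xi> \<times> H \<noteq> 0,
  and on {q1 = 0} one finds q2 q3 = - (\<xi> \<bullet> H)^2 |\<xi> \<times> H|^2 \<noteq> 0, so the three sheets are disjoint.\<close>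

lemma det_scalar_plus_dyads:
  fixes \<xi> h :: "real^3" and A a s :: real
  shows "det (\<chi> i j. A * (if i = j then 1 else 0) - a * (\<xi>$i * \<xi>$j) + s * (\<xi>$i * h$j + h$i * \<xi>$j))
       = A * ((A + s * (h \<bullet> \<xi>))^2 - a * (\<xi> \<bullet> \<xi>) * (A + s * (h \<bullet> \<xi>))
              + s * (\<xi> \<bullet> \<xi>) * (a * (h \<bullet> \<xi>) - s * (h \<bullet> h)))"
  by (simp add: det_3 inner_vec_def sum_3) algebra

lemma monic_quadratic_factor:
  fixes B C X :: real
  assumes "0 \<le> B^2 - 4 * C"
  shows "(X - (1/2) * (B - sqrt (B^2 - 4 * C))) * (X - (1/2) * (B + sqrt (B^2 - 4 * C)))
       = X^2 - B * X + C"
proof -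
  have "(X - (1/2) * (B - sqrt (B^2 - 4 * C))) * (X - (1/2) * (B + sqrt (B^2 - 4 * C)))
      = X^2 - B * X + (B^2 - (sqrt (B^2 - 4 * C))^2) / 4"
    by (simp add: field_simps power2_eq_square)
  also have "(sqrt (B^2 - 4 * C))^2 = B^2 - 4 * C" using assms by simp
  finally show ?thesis by simp
qed

lemma det_p2:
  "det (p2 \<gamma> \<rho> p H x \<tau> \<xi>) = q1 \<rho> H x \<tau> \<xi> *
     ((\<rho> x * \<tau>^2)^2 - (\<gamma> * p x + (norm (H x))^2) * (\<xi> \<bullet> \<xi>) * (\<rho> x * \<tau>^2)
      + \<gamma> * p x * (H x \<bullet> \<xi>)^2 * (\<xi> \<bullet> \<xi>))"
  unfolding p2_def det_scalar_plus_dyads q1_def power2_norm_eq_inner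
  by (simp add: algebra_simps power2_eq_square)

lemma q2_mult_q3:
  assumes "\<rho> x > 0" and "csq \<gamma> \<rho> p x \<ge> 0"
  shows "q2 \<gamma> \<rho> p H x \<tau> \<xi> * q3 \<gamma> \<rho> p H x \<tau> \<xi> =
     (\<rho> x * \<tau>^2)^2 - (\<gamma> * p x + (norm (H x))^2) * (\<xi> \<bullet> \<xi>) * (\<rho> x * \<tau>^2)
      + \<gamma> * p x * (H x \<bullet> \<xi>)^2 * (\<xi> \<bullet> \<xi>)"
proof -
  define c h b n where "c = csq \<gamma> \<rho> p x" and "h = hsq \<rho> H x" and "b = bsq \<rho> H x \<xi>"
    and "n = (norm \<xi>)^2"
  define B C where "B = (c + h) * n" and "C = c * n * (n * h - b)"
  have discrim: "B^2 - 4 * C = (c - h)^2 * (norm \<xi>)^4 + 4 * b * c * (norm \<xi>)^2"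
    unfolding B_def C_def n_def by algebra
  have "0 \<le> B^2 - 4 * C"
    unfolding discrim b_def bsq_def using \<open>\<rho> x > 0\<close> \<open>csq \<gamma> \<rho> p x \<ge> 0\<close> c_def by simp
  have "q2 \<gamma> \<rho> p H x \<tau> \<xi> * q3 \<gamma> \<rho> p H x \<tau> \<xi>
      = (\<rho> x)^2 * ((\<tau>^2 - (1/2) * (B - sqrt (B^2 - 4 * C))) * (\<tau>^2 - (1/2) * (B + sqrt (B^2 - 4 * C))))"
    unfolding q2_def q3_def cssq_def cfsq_def discrim
    by (simp add: B_def c_def h_def b_def n_def power2_eq_square)
  also have "\<dots> = (\<rho> x)^2 * ((\<tau>^2)^2 - B * \<tau>^2 + C)"
    using monic_quadratic_factor[OF \<open>0 \<le> B^2 - 4 * C\<close>] by simp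
  also have "\<dots> = (\<rho> x * \<tau>^2)^2 - (\<gamma> * p x + (norm (H x))^2) * (\<xi> \<bullet> \<xi>) * (\<rho> x * \<tau>^2)
      + \<gamma> * p x * (H x \<bullet> \<xi>)^2 * (\<xi> \<bullet> \<xi>)"
  proof -
    have "\<rho> x * (n * h - b) = (norm \<xi> * norm (H x))^2 - (norm (cross3 \<xi> (H x)))^2"
      using \<open>\<rho> x > 0\<close> unfolding n_def h_def b_def hsq_def bsq_def
      by (simp add: field_simps power_mult_distrib)
    also have "\<dots> = (H x \<bullet> \<xi>)^2"
      using norm_cross_dot[of \<xi> "H x"] by (simp add: inner_commute)
    finally have lagrange: "\<rho> x * (n * h - b) = (H x \<bullet> \<xi>)^2" .
    have "(\<rho> x)^2 * C = \<gamma> * p x * n * (\<rho> x * (n * h - b))"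
      using \<open>\<rho> x > 0\<close> unfolding C_def c_def csq_def by (simp add: field_simps power2_eq_square)
    also have "\<dots> = \<gamma> * p x * (H x \<bullet> \<xi>)^2 * (\<xi> \<bullet> \<xi>)"
      by (simp only: lagrange) (simp add: n_def power2_norm_eq_inner)
    finally have "(\<rho> x)^2 * C = \<gamma> * p x * (H x \<bullet> \<xi>)^2 * (\<xi> \<bullet> \<xi>)" .
    moreover have "(\<rho> x)^2 * B = (\<gamma> * p x + (norm (H x))^2) * (\<xi> \<bullet> \<xi>) * \<rho> x"
      using \<open>\<rho> x > 0\<close> unfolding B_def c_def h_def csq_def hsq_def n_def power2_norm_eq_inner
      by (simp add: field_simps power2_eq_square)
    ultimately show ?thesis by algebra
  qed
  finally show ?thesis .
qed

lemma det_p2_eq_q1_q2_q3: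
  assumes "\<rho> x > 0" and "csq \<gamma> \<rho> p x \<ge> 0"
  shows "det (p2 \<gamma> \<rho> p H x \<tau> \<xi>) = q1 \<rho> H x \<tau> \<xi> * q2 \<gamma> \<rho> p H x \<tau> \<xi> * q3 \<gamma> \<rho> p H x \<tau> \<xi>"
  unfolding det_p2 mult.assoc q2_mult_q3[OF assms] ..

lemma cssq_less_cfsq:
  assumes "\<rho> x > 0" and "csq \<gamma> \<rho> p x > 0" and "cross3 \<xi> (H x) \<noteq> 0"
  shows "cssq \<gamma> \<rho> p H x \<xi> < cfsq \<gamma> \<rho> p H x \<xi>"
proof -
  have "\<xi> \<noteq> 0" using \<open>cross3 \<xi> (H x) \<noteq> 0\<close> by auto
  then have "0 < 4 * bsq \<rho> H x \<xi> * csq \<gamma> \<rho> p x * (norm \<xi>)^2"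
    using assms unfolding bsq_def by simp
  then show ?thesis
    unfolding cssq_def cfsq_def by (simp add: add_nonneg_pos)
qed

lemma q2_mult_q3_on_q1_zero:
  assumes "\<rho> x > 0" and "csq \<gamma> \<rho> p x \<ge> 0" and "q1 \<rho> H x \<tau> \<xi> = 0"
  shows "q2 \<gamma> \<rho> p H x \<tau> \<xi> * q3 \<gamma> \<rho> p H x \<tau> \<xi> = - ((H x \<bullet> \<xi>)^2 * (norm (cross3 \<xi> (H x)))^2)"
proof -
  have "\<rho> x * \<tau>^2 = (H x \<bullet> \<xi>)^2" using \<open>q1 \<rho> H x \<tau> \<xi> = 0\<close> unfolding q1_def by simp
  then have "q2 \<gamma> \<rho> p H x \<tau> \<xi> * q3 \<gamma> \<rho> p H x \<tau> \<xi>
      = (H x \<bullet> \<xi>)^2 * ((H x \<bullet> \<xi>)^2 - (norm (H x))^2 * (\<xi> \<bullet> \<xi>))"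
    unfolding q2_mult_q3[OF assms(1,2)] by (simp add: algebra_simps power2_eq_square)
  also have "(H x \<bullet> \<xi>)^2 - (norm (H x))^2 * (\<xi> \<bullet> \<xi>) = - ((norm (cross3 \<xi> (H x)))^2)"
    using norm_cross_dot[of \<xi> "H x"]
    by (simp add: inner_commute power_mult_distrib power2_norm_eq_inner algebra_simps)
  finally show ?thesis by simp
qed

theorem lemma5p1:
  fixes \<rho> p :: "real^3 \<Rightarrow> real" and H :: "real^3 \<Rightarrow> real^3" and \<gamma> :: real
  assumes "smooth_fun \<rho>" and "smooth_fun p" and "smooth_vfun H"
    and "\<forall>x. \<rho> x > 0"
    and "\<forall>x. csq \<gamma> \<rho> p x > 0"
    and "\<forall>x. 0 < (norm (H x))^2 \<and> (norm (H x))^2 \<noteq> \<rho> x * csq \<gamma> \<rho> p x"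
  defines "CharVar \<equiv> {((t :: real, x), (\<tau> :: real, \<xi>)).
              \<xi> \<bullet> H x \<noteq> 0 \<and> cross3 \<xi> (H x) \<noteq> 0 \<and> det (p2 \<gamma> \<rho> p H x \<tau> \<xi>) = 0}"
    and "Z1 \<equiv> {((t :: real, x), (\<tau> :: real, \<xi>)).
              \<xi> \<bullet> H x \<noteq> 0 \<and> cross3 \<xi> (H x) \<noteq> 0 \<and> q1 \<rho> H x \<tau> \<xi> = 0}"
    and "Z2 \<equiv> {((t :: real, x), (\<tau> :: real, \<xi>)).
              \<xi> \<bullet> H x \<noteq> 0 \<and> cross3 \<xi> (H x) \<noteq> 0 \<and> q2 \<gamma> \<rho> p H x \<tau> \<xi> = 0}"
    and "Z3 \<equiv> {((t :: real, x), (\<tau> :: real, \<xi>)).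
              \<xi> \<bullet> H x \<noteq> 0 \<and> cross3 \<xi> (H x) \<noteq> 0 \<and> q3 \<gamma> \<rho> p H x \<tau> \<xi> = 0}"
  shows "CharVar = Z1 \<union> Z2 \<union> Z3 \<and> Z1 \<inter> Z2 = {} \<and> Z1 \<inter> Z3 = {} \<and> Z2 \<inter> Z3 = {}"
proof -
  have \<rho>: "\<rho> x > 0" and c: "csq \<gamma> \<rho> p x > 0" for x
    using assms(4,5) by auto
  have factor: "det (p2 \<gamma> \<rho> p H x \<tau> \<xi>) = q1 \<rho> H x \<tau> \<xi> * q2 \<gamma> \<rho> p H x \<tau> \<xi> * q3 \<gamma> \<rho> p H x \<tau> \<xi>"
    for x \<tau> \<xi>
    using det_p2_eq_q1_q2_q3 \<rho> c less_imp_le by blast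
  have q1_zero_sep: "q2 \<gamma> \<rho> p H x \<tau> \<xi> * q3 \<gamma> \<rho> p H x \<tau> \<xi> \<noteq> 0"
    if "q1 \<rho> H x \<tau> \<xi> = 0" and "\<xi> \<bullet> H x \<noteq> 0" and "cross3 \<xi> (H x) \<noteq> 0" for x \<tau> \<xi>
    using q2_mult_q3_on_q1_zero[OF \<rho> less_imp_le[OF c] that(1)] that(2,3) by (simp add: inner_commute)
  have q2_zero_sep: "q3 \<gamma> \<rho> p H x \<tau> \<xi> \<noteq> 0"
    if "q2 \<gamma> \<rho> p H x \<tau> \<xi> = 0" and "cross3 \<xi> (H x) \<noteq> 0" for x \<tau> \<xi>
  proof -
    have "cssq \<gamma> \<rho> p H x \<xi> < cfsq \<gamma> \<rho> p H x \<xi>"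
      using \<rho> c that(2) by (rule cssq_less_cfsq)
    then show ?thesis using that(1) \<rho>[of x] unfolding q2_def q3_def by simp
  qed
  show ?thesis
    unfolding CharVar_def Z1_def Z2_def Z3_def factor using q1_zero_sep q2_zero_sep by auto
qed

end
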